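(* For every $n\ge 0$, the derivation $u_{\delta_{2n}}$ belongs to $\mathfrak{krv}$, where $\delta_{2n}=\Theta(x\otimes\operatorname{ad}_y^{\,2n}(x))$.
   Context: $A=\mathbb{R}\langle x,y\rangle$; $L\subset A$ the free Lie algebra on $x,y$; $\operatorname{ad}_y(l)=[y,l]$. $\operatorname{tr}$ is the projection $A\to A/\operatorname{span}\{ab-ba\}$. $F(L)$ is the quotient of $L\otimes L$ by the span of $a\otimes b-b\otimes a$ and $a\otimes[b,c]-[a,b]\otimes c$, with projection $\Theta$, regarded inside $A/\operatorname{span}\{ab-ba\}$ via $\Theta(a\otimes b)\mapsto\operatorname{tr}(ab)$. For $x_0\in\{x,y\}$, $\partial_{x_0}$ maps cyclic words by $\operatorname{tr}(a_1\cdots a_n)\mapsto\sum_{i:\,a_i=x_0}a_{i+1}\cdots a_n a_1\cdots a_{i-1}$. For $\Gamma\in F(L)$, $u_\Gamma$ is the derivation of $L$ with $u_\Gamma(x)=\partial_y\Gamma$, $u_\Gamma(y)=-\partial_x\Gamma$. For $l\in A$, $\partial^L_{x_0}(l)=\sum\partial^1\,\epsilon(\partial^2)\in A$, where $\sum\partial^1\otimes\partial^2$ is the sum over occurrences of $x_0$ in monomials of (prefix)$\otimes$(suffix) and $\epsilon$ is the constant term. $\operatorname{div}(u)=\operatorname{tr}(\partial^L_x(u(x))+\partial^L_y(u(y)))$, and $\mathfrak{krv}=\{u\in\operatorname{Der}(L):u([x,y])=0,\ \operatorname{div}(u)=0\}$. *)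

theory Defs
  imports Complex_Main "HOL-Library.Poly_Mapping"
begin

datatype gen = X | Y

datatype word = Word (letters: "gen list")

instantiation word :: monoid_add
begin
definition zero_word :: word where "zero_word = Word []"
definition plus_word :: "word \<Rightarrow> word \<Rightarrow> word" where
  "plus_word u v = Word (letters u @ letters v)"
instance by standard (auto simp: zero_word_def plus_word_def)
end

(* A = R<x,y>: finitely supported real coefficient functions on words,
   with the convolution (concatenation) product from Poly_Mapping *)
type_synonym A = "word \<Rightarrow>\<^sub>0 real"

definition wd :: "gen list \<Rightarrow> A" where
  "wd w = Poly_Mapping.single (Word w) 1"

definition gn :: "gen \<Rightarrow> A" where
  "gn g = wd [g]"

definition smult :: "real \<Rightarrow> A \<Rightarrow> A" where
  "smult c a = Poly_Mapping.single 0 c * a"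

definition lin_ext :: "(gen list \<Rightarrow> A) \<Rightarrow> A \<Rightarrow> A" where
  "lin_ext f a = (\<Sum>w\<in>Poly_Mapping.keys a. smult (Poly_Mapping.lookup a w) (f (letters w)))"

definition bracket :: "A \<Rightarrow> A \<Rightarrow> A" where
  "bracket a b = a * b - b * a"

(* the free Lie algebra L \<subseteq> A: Lie subalgebra generated by x, y *)
inductive_set freeLie :: "A set" where
  gen: "gn g \<in> freeLie"
| add: "a \<in> freeLie \<Longrightarrow> b \<in> freeLie \<Longrightarrow> a + b \<in> freeLie"
| scal: "a \<in> freeLie \<Longrightarrow> smult c a \<in> freeLie"
| brk: "a \<in> freeLie \<Longrightarrow> b \<in> freeLie \<Longrightarrow> bracket a b \<in> freeLie"

definition ad :: "A \<Rightarrow> A \<Rightarrow> A" where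
  "ad y l = bracket y l"

(* span{ab - ba}; tr z = 0 in A/span{ab-ba} iff z belongs to this set *)
inductive_set comm_span :: "A set" where
  zero: "0 \<in> comm_span"
| comm: "a * b - b * a \<in> comm_span"
| add: "a \<in> comm_span \<Longrightarrow> b \<in> comm_span \<Longrightarrow> a + b \<in> comm_span"
| scal: "a \<in> comm_span \<Longrightarrow> smult c a \<in> comm_span"

definition tr_zero :: "A \<Rightarrow> bool" where
  "tr_zero a \<longleftrightarrow> a \<in> comm_span"

(* cyclic derivative: tr(a_1...a_n) \<mapsto> \<Sum>_{a_i = x0} a_{i+1}...a_n a_1...a_{i-1};
   defined on representatives in A (it is well defined on A/span{ab-ba}) *)
definition cyc_partial :: "gen \<Rightarrow> A \<Rightarrow> A" where
  "cyc_partial x0 = lin_ext (\<lambda>w. \<Sum>i\<in>{i. i < length w \<and> w ! i = x0}.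
                                 wd (drop (Suc i) w @ take i w))"

definition eps :: "A \<Rightarrow> real" where
  "eps a = Poly_Mapping.lookup a 0"

(* \<partial>^L_{x0}(l) = \<Sum> \<partial>^1 \<epsilon>(\<partial>^2) *)
definition lie_partial :: "gen \<Rightarrow> A \<Rightarrow> A" where
  "lie_partial x0 = lin_ext (\<lambda>w. \<Sum>i\<in>{i. i < length w \<and> w ! i = x0}.
                                 smult (eps (wd (drop (Suc i) w))) (wd (take i w)))"

definition der_ext :: "A \<Rightarrow> A \<Rightarrow> A \<Rightarrow> A" where
  "der_ext a b = lin_ext (\<lambda>w. \<Sum>i<length w.
       wd (take i w) * (if w ! i = X then a else b) * wd (drop (Suc i) w))"

definition u_of :: "A \<Rightarrow> A \<Rightarrow> A" where
  "u_of \<Gamma> = der_ext (cyc_partial Y \<Gamma>) (- cyc_partial X \<Gamma>)"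

definition is_Der_L :: "(A \<Rightarrow> A) \<Rightarrow> bool" where
  "is_Der_L u \<longleftrightarrow>
     (\<forall>l\<in>freeLie. u l \<in> freeLie) \<and>
     (\<forall>a\<in>freeLie. \<forall>b\<in>freeLie. u (a + b) = u a + u b) \<and>
     (\<forall>a\<in>freeLie. \<forall>c. u (smult c a) = smult c (u a)) \<and>
     (\<forall>a\<in>freeLie. \<forall>b\<in>freeLie. u (bracket a b) = bracket (u a) b + bracket a (u b))"

(* div(u) = tr(\<partial>^L_x(u x) + \<partial>^L_y(u y)), recorded by its representative in A *)
definition div_rep :: "(A \<Rightarrow> A) \<Rightarrow> A" where
  "div_rep u = lie_partial X (u (gn X)) + lie_partial Y (u (gn Y))"

definition krv :: "(A \<Rightarrow> A) set" where
  "krv = {u. is_Der_L u \<and> u (bracket (gn X) (gn Y)) = 0 \<and> tr_zero (div_rep u)}"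

(* \<delta>_{2n} = \<Theta>(x \<otimes> ad_y^{2n}(x)), regarded in A/span{ab-ba} as tr(x ad_y^{2n}(x));
   here given by the representative x * ad_y^{2n}(x) \<in> A *)
definition delta :: "nat \<Rightarrow> A" where
  "delta n = gn X * ((ad (gn Y)) ^^ (2 * n)) (gn X)"

end

theory Submission
  imports Defs
begin

(* Write a_k = ad_y^k(x), so that delta_2n = x a_2n.  Cutting x a_2n open at the letters
   x and y gives d_x delta = 2 a_2n and d_y delta = sum_{i<2n} (-1)^i [a_(2n-1-i), a_i],
   both Lie elements, so u is the derivation of L extending x |-> d_y delta, y |-> -d_x delta.
   For every cyclic word G one has [x, d_x G] + [y, d_y G] = 0, which is u_G([x,y]) = 0.
   For the divergence, [y,p] y^j is a commutator, so modulo commutators only the terms of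
   d^L_x d_y delta and d^L_y d_x delta that involve a_0 = x survive; each of them is
   -2 x y^(2n-1), and they cancel. *)

lemma poly_mapping_sum_single:
  fixes a :: "'a \<Rightarrow>\<^sub>0 'b::comm_monoid_add"
  shows "a = (\<Sum>k\<in>Poly_Mapping.keys a. Poly_Mapping.single k (Poly_Mapping.lookup a k))"
proof -
  have lookup_sum_single: "finite I \<Longrightarrow>
      Poly_Mapping.lookup (\<Sum>k\<in>I. Poly_Mapping.single k (Poly_Mapping.lookup a k)) j
      = (if j \<in> I then Poly_Mapping.lookup a j else 0)" for I j
    by (induction I rule: finite_induct) (auto simp: lookup_single lookup_add when_def)
  show ?thesis
    by (rule poly_mapping_eqI) (fastforce simp: in_keys_iff lookup_sum_single)
qed

lemma poly_mapping_single_induct [case_names zero single add]: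
  fixes a :: "'a \<Rightarrow>\<^sub>0 'b::comm_monoid_add"
  assumes "P 0"
    and "\<And>k c. P (Poly_Mapping.single k c)"
    and "\<And>a b. P a \<Longrightarrow> P b \<Longrightarrow> P (a + b)"
  shows "P a"
proof -
  have "finite I \<Longrightarrow> P (\<Sum>k\<in>I. Poly_Mapping.single k (Poly_Mapping.lookup a k))" for I
    by (induction I rule: finite_induct) (auto intro: assms)
  then show ?thesis
    by (subst poly_mapping_sum_single) simp
qed

lemma wd_append: "wd (u @ v) = wd u * wd v"
  by (simp add: wd_def mult_single plus_word_def)

lemma wd_Nil: "wd [] = 1"
  by (simp add: wd_def zero_word_def[symmetric])

lemma wd_Cons: "wd (g # w) = gn g * wd w"
  using wd_append[of "[g]" w] by (simp add: gn_def)

lemma smult_mult_left: "smult c a * b = smult c (a * b)"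
  by (simp add: smult_def mult.assoc)

lemma single_0_commute: "Poly_Mapping.single 0 c * (a::A) = a * Poly_Mapping.single 0 c"
proof (induction a rule: poly_mapping_single_induct)
  case (single k d)
  then show ?case by (simp add: mult_single ac_simps)
qed (auto simp: distrib_left distrib_right)

lemma smult_mult_right: "a * smult c b = smult c (a * b)"
  by (metis smult_def mult.assoc single_0_commute)

lemmas smult_mult = smult_mult_left smult_mult_right

lemma smult_add: "smult c (a + b) = smult c a + smult c b"
  by (simp add: smult_def distrib_left)

lemma smult_diff: "smult c (a - b) = smult c a - smult c b"
  by (simp add: smult_def right_diff_distrib)

lemma smult_sum: "smult c (sum f I) = (\<Sum>i\<in>I. smult c (f i))"
  by (simp add: smult_def sum_distrib_left)

lemma smult_smult: "smult c (smult d a) = smult (c * d) a"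
  by (simp add: smult_def mult.assoc[symmetric] mult_single)

lemma smult_0_right [simp]: "smult c 0 = 0"
  by (simp add: smult_def)

lemma smult_one [simp]: "smult 1 a = a"
  by (simp add: smult_def)

lemma smult_0_left [simp]: "smult 0 a = 0"
  by (simp add: smult_def)

lemma smult_minus_one: "smult (-1) a = - a"
  by (simp add: smult_def single_uminus)

lemma single_eq_smult_wd: "Poly_Mapping.single k c = smult c (wd (letters k))"
  by (simp add: smult_def wd_def mult_single)

lemma single_mult_single:
  "Poly_Mapping.single k c * Poly_Mapping.single l d = smult (c * d) (wd (letters k @ letters l))"
proof -
  have "Poly_Mapping.single k c * Poly_Mapping.single l d
      = Poly_Mapping.single (Word (letters k @ letters l)) (c * d)"
    by (simp add: mult_single plus_word_def)
  then show ?thesis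
    by (simp add: single_eq_smult_wd)
qed

lemma lin_ext_superset:
  assumes "finite S" and "Poly_Mapping.keys a \<subseteq> S"
  shows "lin_ext f a = (\<Sum>w\<in>S. smult (Poly_Mapping.lookup a w) (f (letters w)))"
  unfolding lin_ext_def
  by (rule sum.mono_neutral_left) (use assms in \<open>auto simp: in_keys_iff\<close>)

lemma lin_ext_add: "lin_ext f (a + b) = lin_ext f a + lin_ext f b"
proof -
  let ?S = "Poly_Mapping.keys a \<union> Poly_Mapping.keys b"
  have "lin_ext f (a + b) = (\<Sum>w\<in>?S. smult (Poly_Mapping.lookup (a + b) w) (f (letters w)))"
    by (rule lin_ext_superset) (auto simp: keys_add)
  also have "\<dots> = (\<Sum>w\<in>?S. smult (Poly_Mapping.lookup a w) (f (letters w)))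
                + (\<Sum>w\<in>?S. smult (Poly_Mapping.lookup b w) (f (letters w)))"
    by (simp add: lookup_add smult_def single_add distrib_right sum.distrib)
  also have "\<dots> = lin_ext f a + lin_ext f b"
    using lin_ext_superset[of ?S a f] lin_ext_superset[of ?S b f] by simp
  finally show ?thesis .
qed

lemma lin_ext_0 [simp]: "lin_ext f 0 = 0"
  by (simp add: lin_ext_def)

lemma lin_ext_single: "lin_ext f (Poly_Mapping.single k c) = smult c (f (letters k))"
  by (simp add: lin_ext_def)

lemma lin_ext_wd: "lin_ext f (wd w) = f w"
  by (simp add: wd_def lin_ext_single)

lemma lin_ext_uminus: "lin_ext f (- a) = - lin_ext f a"
  by (metis add.right_inverse add_eq_0_iff lin_ext_add lin_ext_0)

lemma lin_ext_diff: "lin_ext f (a - b) = lin_ext f a - lin_ext f b"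
  by (simp add: diff_conv_add_uminus lin_ext_add lin_ext_uminus del: add_uminus_conv_diff)

lemma lin_ext_smult: "lin_ext f (smult c a) = smult c (lin_ext f a)"
proof (induction a rule: poly_mapping_single_induct)
  case (single k d)
  have "smult c (Poly_Mapping.single k d) = Poly_Mapping.single k (c * d)"
    by (simp add: smult_def mult_single)
  then show ?case
    by (simp add: lin_ext_single smult_smult)
next
  case (add a b)
  then show ?case by (simp add: smult_add lin_ext_add)
qed (simp add: smult_def)

lemma lin_ext_sum: "lin_ext f (sum g I) = (\<Sum>i\<in>I. lin_ext f (g i))"
  by (induction I rule: infinite_finite_induct) (auto simp: lin_ext_add)

lemma sum_filter_lessThan:
  "(\<Sum>i\<in>{i. i < (n::nat) \<and> P i}. f i) = (\<Sum>i<n. if P i then f i else 0)"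
  by (simp add: sum.inter_filter[symmetric] conj_commute)

lemma der_ext_add: "der_ext a b (p + q) = der_ext a b p + der_ext a b q"
  by (simp add: der_ext_def lin_ext_add)

lemma der_ext_0 [simp]: "der_ext a b 0 = 0"
  by (simp add: der_ext_def)

lemma der_ext_diff: "der_ext a b (p - q) = der_ext a b p - der_ext a b q"
  by (simp add: der_ext_def lin_ext_diff)

lemma der_ext_smult: "der_ext a b (smult c p) = smult c (der_ext a b p)"
  by (simp add: der_ext_def lin_ext_smult)

lemma der_ext_one: "der_ext a b 1 = 0"
  by (simp add: der_ext_def lin_ext_wd flip: wd_Nil)

lemma der_ext_wd_Cons:
  "der_ext a b (wd (h # w)) = (if h = X then a else b) * wd w + gn h * der_ext a b (wd w)"
  unfolding der_ext_def lin_ext_wd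
  by (simp only: length_Cons sum.lessThan_Suc_shift)
     (simp add: wd_Cons wd_Nil sum_distrib_left mult.assoc)

lemma der_ext_gn: "der_ext a b (gn h) = (if h = X then a else b)"
  by (simp add: gn_def der_ext_wd_Cons der_ext_one wd_Nil)

lemma der_ext_wd_append:
  "der_ext a b (wd (u @ v)) = der_ext a b (wd u) * wd v + wd u * der_ext a b (wd v)"
proof (induction u)
  case Nil
  then show ?case by (simp add: wd_Nil der_ext_one)
next
  case (Cons h u)
  then show ?case
    by (simp only: append_Cons der_ext_wd_Cons) (simp add: wd_Cons wd_append algebra_simps)
qed

lemma der_ext_mult: "der_ext a b (p * q) = der_ext a b p * q + p * der_ext a b q"
proof (induction p rule: poly_mapping_single_induct)
  case (single k c)
  show ?case
  proof (induction q rule: poly_mapping_single_induct)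
    case (single l d)
    then show ?case
      by (simp only: single_mult_single)
         (simp add: single_eq_smult_wd der_ext_smult der_ext_wd_append
          smult_mult smult_smult smult_add mult.commute)
  qed (simp_all add: der_ext_add algebra_simps)
qed (simp_all add: der_ext_add algebra_simps)

lemma der_ext_bracket:
  "der_ext a b (bracket p q) = bracket (der_ext a b p) q + bracket p (der_ext a b q)"
  by (simp add: bracket_def der_ext_diff der_ext_mult algebra_simps)

lemma der_ext_in_freeLie:
  assumes "a \<in> freeLie" and "b \<in> freeLie" and "l \<in> freeLie"
  shows "der_ext a b l \<in> freeLie"
  using assms(3)
proof (induction rule: freeLie.induct)
  case (gen g)
  then show ?case using assms(1,2) by (simp add: der_ext_gn)
next
  case (add p q)
  then show ?case by (simp add: der_ext_add freeLie.add)
next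
  case (scal p c)
  then show ?case by (simp add: der_ext_smult freeLie.scal)
next
  case (brk p q)
  then show ?case by (simp add: der_ext_bracket freeLie.add freeLie.brk)
qed

lemma is_Der_L_der_ext:
  assumes "a \<in> freeLie" and "b \<in> freeLie"
  shows "is_Der_L (der_ext a b)"
  using der_ext_in_freeLie[OF assms]
  by (simp add: is_Der_L_def der_ext_add der_ext_smult der_ext_bracket)

section \<open>Cyclic derivatives\<close>

(* cyc_partial g U = cyc_insert g U 1; allowing an arbitrary V at the cut makes the Leibniz
   rule cyc_insert_mult close up. *)
definition cyc_insert :: "gen \<Rightarrow> A \<Rightarrow> A \<Rightarrow> A" where
  "cyc_insert g U V = lin_ext (\<lambda>w. \<Sum>i\<in>{i. i < length w \<and> w ! i = g}.
                                     wd (drop (Suc i) w) * V * wd (take i w)) U"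

lemma cyc_partial_eq_cyc_insert: "cyc_partial g U = cyc_insert g U 1"
  by (simp add: cyc_partial_def cyc_insert_def wd_append)

lemma cyc_insert_wd:
  "cyc_insert g (wd w) V
   = (\<Sum>i<length w. if w ! i = g then wd (drop (Suc i) w) * V * wd (take i w) else 0)"
  by (simp add: cyc_insert_def lin_ext_wd sum_filter_lessThan)

lemma cyc_insert_one: "cyc_insert g 1 V = 0"
  by (simp add: cyc_insert_wd flip: wd_Nil)

lemma cyc_insert_wd_Cons:
  "cyc_insert g (wd (h # w)) V
   = (if h = g then wd w * V else 0) + cyc_insert g (wd w) (V * gn h)"
  unfolding cyc_insert_wd
  by (simp only: length_Cons sum.lessThan_Suc_shift)
     (simp add: wd_Cons wd_Nil mult.assoc del: drop_Suc cong: if_cong)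

lemma cyc_insert_gn: "cyc_insert g (gn h) V = (if h = g then V else 0)"
  by (simp add: gn_def cyc_insert_wd_Cons cyc_insert_one wd_Nil)

lemma cyc_insert_add: "cyc_insert g (p + q) V = cyc_insert g p V + cyc_insert g q V"
  by (simp add: cyc_insert_def lin_ext_add)

lemma cyc_insert_0 [simp]: "cyc_insert g 0 V = 0"
  by (simp add: cyc_insert_def)

lemma cyc_insert_diff: "cyc_insert g (p - q) V = cyc_insert g p V - cyc_insert g q V"
  by (simp add: cyc_insert_def lin_ext_diff)

lemma cyc_insert_smult: "cyc_insert g (smult c U) V = smult c (cyc_insert g U V)"
  by (simp add: cyc_insert_def lin_ext_smult)

lemma cyc_insert_add_right:
  "cyc_insert g U (V1 + V2) = cyc_insert g U V1 + cyc_insert g U V2"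
proof (induction U rule: poly_mapping_single_induct)
  case (single k c)
  have "cyc_insert g (wd w) (V1 + V2) = cyc_insert g (wd w) V1 + cyc_insert g (wd w) V2" for w
    by (simp add: cyc_insert_wd algebra_simps sum.distrib[symmetric] if_distrib cong: if_cong)
  then show ?case
    by (simp add: single_eq_smult_wd cyc_insert_smult smult_add)
qed (simp_all add: cyc_insert_add algebra_simps)

lemma cyc_insert_smult_right: "cyc_insert g U (smult c V) = smult c (cyc_insert g U V)"
proof (induction U rule: poly_mapping_single_induct)
  case (single k d)
  have "cyc_insert g (wd w) (smult c V) = smult c (cyc_insert g (wd w) V)" for w
    unfolding cyc_insert_wd smult_sum by (rule sum.cong) (simp_all add: smult_mult)
  then show ?case
    by (simp add: single_eq_smult_wd cyc_insert_smult smult_smult mult.commute)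
qed (simp_all add: cyc_insert_add smult_add)

lemma cyc_insert_0_right [simp]: "cyc_insert g U 0 = 0"
  using cyc_insert_smult_right[of g U 0 0] by simp

lemma cyc_insert_diff_right:
  "cyc_insert g U (V1 - V2) = cyc_insert g U V1 - cyc_insert g U V2"
  using cyc_insert_add_right[of g U "V1 - V2" V2] by (simp add: eq_diff_eq)

lemma cyc_insert_wd_append:
  "cyc_insert g (wd (u @ v)) V = cyc_insert g (wd u) (wd v * V) + cyc_insert g (wd v) (V * wd u)"
proof (induction u arbitrary: V)
  case Nil
  then show ?case by (simp add: cyc_insert_one wd_Nil)
next
  case (Cons h u)
  then show ?case
    by (simp only: append_Cons cyc_insert_wd_Cons) (simp add: wd_Cons wd_append mult.assoc)
qed

lemma cyc_insert_mult: "cyc_insert g (p * q) V = cyc_insert g p (q * V) + cyc_insert g q (V * p)"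
proof (induction p arbitrary: V rule: poly_mapping_single_induct)
  case (single k c)
  show ?case
  proof (induction q arbitrary: V rule: poly_mapping_single_induct)
    case (single l d)
    then show ?case
      by (simp only: single_mult_single)
         (simp add: single_eq_smult_wd cyc_insert_smult cyc_insert_wd_append
          smult_mult cyc_insert_smult_right smult_smult smult_add mult.commute)
  qed (simp_all add: cyc_insert_add cyc_insert_add_right algebra_simps)
qed (simp_all add: cyc_insert_add cyc_insert_add_right algebra_simps)

lemma bracket_cyc_insert_wd:
  "bracket (gn X) (cyc_insert X (wd w) V) + bracket (gn Y) (cyc_insert Y (wd w) V)
   = wd w * V - V * wd w"
proof (induction w arbitrary: V)
  case Nil
  then show ?case by (simp add: cyc_insert_one wd_Nil bracket_def)
next
  case (Cons h w)
  have "bracket (gn X) (cyc_insert X (wd (h # w)) V) + bracket (gn Y) (cyc_insert Y (wd (h # w)) V)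
     = bracket (gn h) (wd w * V)
       + (bracket (gn X) (cyc_insert X (wd w) (V * gn h))
          + bracket (gn Y) (cyc_insert Y (wd w) (V * gn h)))"
    by (cases h) (simp_all add: cyc_insert_wd_Cons bracket_def algebra_simps)
  also have "\<dots> = wd (h # w) * V - V * wd (h # w)"
    by (simp only: Cons.IH) (simp add: bracket_def wd_Cons algebra_simps)
  finally show ?case .
qed

lemma bracket_cyc_insert:
  "bracket (gn X) (cyc_insert X U V) + bracket (gn Y) (cyc_insert Y U V) = U * V - V * U"
proof (induction U rule: poly_mapping_single_induct)
  case (single k c)
  then show ?case
    using bracket_cyc_insert_wd[of "letters k" V]
    by (simp add: single_eq_smult_wd cyc_insert_smult bracket_def smult_mult
        smult_diff[symmetric] smult_add[symmetric])
next
  case (add a b)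
  have "bracket (gn X) (cyc_insert X (a + b) V) + bracket (gn Y) (cyc_insert Y (a + b) V)
      = (bracket (gn X) (cyc_insert X a V) + bracket (gn Y) (cyc_insert Y a V))
        + (bracket (gn X) (cyc_insert X b V) + bracket (gn Y) (cyc_insert Y b V))"
    by (simp add: cyc_insert_add bracket_def algebra_simps)
  also have "\<dots> = (a + b) * V - V * (a + b)"
    by (simp only: add.IH) (simp add: algebra_simps)
  finally show ?case .
qed (simp add: bracket_def)

corollary bracket_cyc_partial:
  "bracket (gn X) (cyc_partial X U) + bracket (gn Y) (cyc_partial Y U) = 0"
  using bracket_cyc_insert[of U 1] by (simp add: cyc_partial_eq_cyc_insert)

section \<open>A criterion for membership in krv\<close>

lemma freeLie_0: "0 \<in> freeLie"
  using freeLie.scal[OF freeLie.gen[of X], of 0] by simp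

lemma freeLie_uminus: "a \<in> freeLie \<Longrightarrow> - a \<in> freeLie"
  using freeLie.scal[of a "-1"] by (simp add: smult_minus_one)

lemma freeLie_sum: "(\<And>i. i \<in> I \<Longrightarrow> f i \<in> freeLie) \<Longrightarrow> sum f I \<in> freeLie"
  by (induction I rule: infinite_finite_induct) (auto simp: freeLie_0 intro: freeLie.add)

lemma freeLie_sign: "a \<in> freeLie \<Longrightarrow> (-1) ^ i * a \<in> freeLie"
  by (cases "even i") (simp_all add: freeLie_uminus)

lemma lie_partial_add: "lie_partial g (p + q) = lie_partial g p + lie_partial g q"
  by (simp add: lie_partial_def lin_ext_add)

lemma lie_partial_0 [simp]: "lie_partial g 0 = 0"
  by (simp add: lie_partial_def)

lemma lie_partial_uminus: "lie_partial g (- p) = - lie_partial g p"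
  by (simp add: lie_partial_def lin_ext_uminus)

lemma lie_partial_diff: "lie_partial g (p - q) = lie_partial g p - lie_partial g q"
  by (simp add: lie_partial_def lin_ext_diff)

lemma lie_partial_sum: "lie_partial g (sum f I) = (\<Sum>i\<in>I. lie_partial g (f i))"
  by (simp add: lie_partial_def lin_ext_sum)

lemma lie_partial_sign: "lie_partial g ((-1) ^ i * p) = (-1) ^ i * lie_partial g p"
  by (cases "even i") (simp_all add: lie_partial_uminus)

lemma u_of_bracket_gn_X_gn_Y: "u_of \<Gamma> (bracket (gn X) (gn Y)) = 0"
proof -
  have "u_of \<Gamma> (bracket (gn X) (gn Y))
      = - (bracket (gn X) (cyc_partial X \<Gamma>) + bracket (gn Y) (cyc_partial Y \<Gamma>))"
    by (simp only: u_of_def der_ext_bracket der_ext_gn) (simp add: bracket_def algebra_simps)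
  then show ?thesis by (simp add: bracket_cyc_partial)
qed

lemma u_of_in_krvI:
  assumes "cyc_partial X \<Gamma> \<in> freeLie" and "cyc_partial Y \<Gamma> \<in> freeLie"
    and "tr_zero (lie_partial X (cyc_partial Y \<Gamma>) - lie_partial Y (cyc_partial X \<Gamma>))"
  shows "u_of \<Gamma> \<in> krv"
proof -
  have "is_Der_L (u_of \<Gamma>)"
    unfolding u_of_def using assms(1,2) by (intro is_Der_L_der_ext freeLie_uminus)
  moreover have "div_rep (u_of \<Gamma>) = lie_partial X (cyc_partial Y \<Gamma>) - lie_partial Y (cyc_partial X \<Gamma>)"
    by (simp add: div_rep_def u_of_def der_ext_gn lie_partial_uminus)
  ultimately show ?thesis
    using assms(3) by (simp add: krv_def u_of_bracket_gn_X_gn_Y)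
qed

section \<open>Cyclic derivatives of delta\<close>

definition ady_x :: "nat \<Rightarrow> A" where
  "ady_x k = (ad (gn Y) ^^ k) (gn X)"

lemma ady_x_0: "ady_x 0 = gn X"
  by (simp add: ady_x_def)

lemma ady_x_Suc: "ady_x (Suc k) = gn Y * ady_x k - ady_x k * gn Y"
  by (simp add: ady_x_def ad_def bracket_def)

lemma ady_x_in_freeLie: "ady_x k \<in> freeLie"
  by (induction k) (simp_all add: ady_x_def ad_def freeLie.gen freeLie.brk)

lemma delta_eq_ady_x: "delta n = gn X * ady_x (2 * n)"
  by (simp add: delta_def ady_x_def)

lemma funpow_ad_Suc_right: "(ad (gn Y) ^^ Suc i) V = (ad (gn Y) ^^ i) (gn Y * V - V * gn Y)"
  by (simp add: funpow_Suc_right ad_def bracket_def del: funpow.simps)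

lemma cyc_insert_X_ady_x: "cyc_insert X (ady_x m) V = (-1) ^ m * (ad (gn Y) ^^ m) V"
proof (induction m arbitrary: V)
  case 0
  then show ?case by (simp add: ady_x_0 cyc_insert_gn)
next
  case (Suc m)
  have "cyc_insert X (ady_x (Suc m)) V = - cyc_insert X (ady_x m) (gn Y * V - V * gn Y)"
    by (simp add: ady_x_Suc cyc_insert_diff cyc_insert_mult cyc_insert_gn cyc_insert_diff_right)
  also have "\<dots> = (-1) ^ Suc m * (ad (gn Y) ^^ Suc m) V"
    by (simp only: Suc.IH funpow_ad_Suc_right) simp
  finally show ?case .
qed

lemma cyc_insert_Y_ady_x:
  "cyc_insert Y (ady_x m) V
   = (\<Sum>i<m. (-1) ^ i * bracket (ady_x (m - 1 - i)) ((ad (gn Y) ^^ i) V))"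
proof (induction m arbitrary: V)
  case 0
  then show ?case by (simp add: ady_x_0 cyc_insert_gn)
next
  case (Suc m)
  have "cyc_insert Y (ady_x (Suc m)) V
      = bracket (ady_x m) V - cyc_insert Y (ady_x m) (gn Y * V - V * gn Y)"
    by (simp add: ady_x_Suc cyc_insert_diff cyc_insert_mult cyc_insert_gn cyc_insert_diff_right
        bracket_def)
  also have "\<dots> = (\<Sum>i<Suc m. (-1) ^ i * bracket (ady_x (Suc m - 1 - i)) ((ad (gn Y) ^^ i) V))"
    by (simp only: Suc.IH sum.lessThan_Suc_shift funpow_ad_Suc_right) (simp add: sum_negf)
  finally show ?case .
qed

lemma cyc_partial_X_delta: "cyc_partial X (delta n) = ady_x (2 * n) + ady_x (2 * n)"
  by (simp add: cyc_partial_eq_cyc_insert delta_eq_ady_x cyc_insert_mult cyc_insert_gn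
      cyc_insert_X_ady_x ady_x_def[symmetric])

lemma cyc_partial_Y_delta:
  "cyc_partial Y (delta n) = (\<Sum>i<2 * n. (-1) ^ i * bracket (ady_x (2 * n - 1 - i)) (ady_x i))"
  by (simp add: cyc_partial_eq_cyc_insert delta_eq_ady_x cyc_insert_mult cyc_insert_gn
      cyc_insert_Y_ady_x ady_x_def[symmetric])

section \<open>The divergence of u_delta\<close>

lemma comm_span_uminus: "a \<in> comm_span \<Longrightarrow> - a \<in> comm_span"
  using comm_span.scal[of a "-1"] by (simp add: smult_minus_one)

lemma comm_span_diff: "a \<in> comm_span \<Longrightarrow> b \<in> comm_span \<Longrightarrow> a - b \<in> comm_span"
  using comm_span.add[OF _ comm_span_uminus]
  by (simp add: diff_conv_add_uminus del: add_uminus_conv_diff)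

lemma comm_span_sum: "(\<And>i. i \<in> I \<Longrightarrow> f i \<in> comm_span) \<Longrightarrow> sum f I \<in> comm_span"
  by (induction I rule: infinite_finite_induct) (auto intro: comm_span.add comm_span.zero)

lemma comm_span_sign: "a \<in> comm_span \<Longrightarrow> (-1) ^ i * a \<in> comm_span"
  by (cases "even i") (simp_all add: comm_span_uminus)

lemma bracket_mult_power_in_comm_span: "bracket q p * q ^ j \<in> comm_span"
proof -
  have "bracket q p * q ^ j = q * (p * q ^ j) - (p * q ^ j) * q"
    by (simp add: bracket_def algebra_simps power_commutes)
  then show ?thesis by (simp add: comm_span.comm)
qed

lemma eps_wd: "eps (wd v) = (if v = [] then 1 else 0)"
  by (auto simp: eps_def wd_def lookup_single when_def zero_word_def)

lemma lie_partial_wd_snoc: "lie_partial g (wd (w @ [h])) = (if h = g then wd w else 0)"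
proof -
  let ?term = "\<lambda>i. if (w @ [h]) ! i = g
      then smult (eps (wd (drop (Suc i) (w @ [h])))) (wd (take i (w @ [h]))) else 0"
  have "lie_partial g (wd (w @ [h])) = (\<Sum>i<length w. ?term i) + ?term (length w)"
    by (simp add: lie_partial_def lin_ext_wd sum_filter_lessThan)
  moreover have "(\<Sum>i<length w. ?term i) = 0"
    by (rule sum.neutral) (auto simp: eps_wd)
  ultimately show ?thesis
    by (simp add: eps_wd)
qed

lemma lie_partial_mult_gn: "lie_partial g (U * gn h) = (if h = g then U else 0)"
proof (induction U rule: poly_mapping_single_induct)
  case (single k c)
  have "Poly_Mapping.single k c * gn h = smult c (wd (letters k @ [h]))"
    by (simp add: gn_def single_eq_smult_wd smult_mult wd_append)
  then show ?case
    by (simp add: lie_partial_def lin_ext_smult lie_partial_wd_snoc[unfolded lie_partial_def]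
        single_eq_smult_wd)
next
  case (add a b)
  then show ?case by (simp add: lie_partial_add distrib_right)
qed simp

(* d^L_y(ad_y^k x): the monomials of ad_y^k(x) ending in y, with that last y removed. *)
fun ady_x_Y_part :: "nat \<Rightarrow> A" where
  "ady_x_Y_part 0 = 0"
| "ady_x_Y_part (Suc k) = gn Y * ady_x_Y_part k - ady_x k"

lemma ady_x_last_letter: "ady_x k = ady_x_Y_part k * gn Y + gn Y ^ k * gn X"
proof (induction k)
  case 0
  then show ?case by (simp add: ady_x_0)
next
  case (Suc k)
  have "ady_x (Suc k) = gn Y * (ady_x_Y_part k * gn Y + gn Y ^ k * gn X) - ady_x k * gn Y"
    by (simp only: ady_x_Suc Suc.IH[symmetric])
  also have "\<dots> = ady_x_Y_part (Suc k) * gn Y + gn Y ^ Suc k * gn X"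
    by (simp add: algebra_simps)
  finally show ?case .
qed

lemma lie_partial_Y_ady_x: "lie_partial Y (ady_x k) = ady_x_Y_part k"
  by (subst ady_x_last_letter) (simp add: lie_partial_add lie_partial_mult_gn)

lemma lie_partial_X_bracket_ady_x:
  "lie_partial X (bracket (ady_x j) (ady_x i)) = ady_x j * gn Y ^ i - ady_x i * gn Y ^ j"
proof -
  have "bracket (ady_x j) (ady_x i)
      = (ady_x j * ady_x_Y_part i) * gn Y + (ady_x j * gn Y ^ i) * gn X
        - ((ady_x i * ady_x_Y_part j) * gn Y + (ady_x i * gn Y ^ j) * gn X)"
    unfolding bracket_def
    by (subst (2) ady_x_last_letter, subst (3) ady_x_last_letter) (simp add: algebra_simps)
  then show ?thesis
    by (simp add: lie_partial_add lie_partial_diff lie_partial_mult_gn)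
qed

lemma ady_x_Suc_mult_power_in_comm_span: "ady_x (Suc k) * gn Y ^ j \<in> comm_span"
  using bracket_mult_power_in_comm_span[of "gn Y" "ady_x k" j]
  by (simp add: ady_x_Suc bracket_def)

lemma ady_x_Y_part_Suc_in_comm_span: "ady_x_Y_part (Suc M) + gn X * gn Y ^ M \<in> comm_span"
proof -
  have "ady_x_Y_part (Suc M) + gn X * gn Y ^ M
      = (gn Y * ady_x_Y_part M - ady_x_Y_part M * gn Y) + (gn X * gn Y ^ M - gn Y ^ M * gn X)"
    using ady_x_last_letter[of M] by (simp add: algebra_simps)
  then show ?thesis
    by (simp only:) (intro comm_span.add comm_span.comm)
qed

lemma lie_partial_X_cyc_partial_Y_delta:
  assumes "2 * n = Suc M"
  shows "lie_partial X (cyc_partial Y (delta n)) + (gn X * gn Y ^ M + gn X * gn Y ^ M) \<in> comm_span"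
proof -
  let ?x = "gn X" and ?y = "gn Y"
  from assms have "odd M"
    by (metis even_Suc even_mult_iff even_numeral)
  define C1 where "C1 = (\<Sum>i<M. (-1) ^ i * (ady_x (M - i) * ?y ^ i))"
  define C2 where "C2 = (\<Sum>i<M. (-1) ^ Suc i * (ady_x (Suc i) * ?y ^ (M - Suc i)))"
  have C1: "C1 \<in> comm_span"
    unfolding C1_def
  proof (intro comm_span_sum comm_span_sign)
    fix i assume "i \<in> {..<M}"
    then have "M - i = Suc (M - i - 1)" by simp
    then show "ady_x (M - i) * ?y ^ i \<in> comm_span"
      by (metis ady_x_Suc_mult_power_in_comm_span)
  qed
  have C2: "C2 \<in> comm_span"
    unfolding C2_def by (intro comm_span_sum comm_span_sign ady_x_Suc_mult_power_in_comm_span)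
  have "lie_partial X (cyc_partial Y (delta n))
      = (\<Sum>i<Suc M. (-1) ^ i * (ady_x (M - i) * ?y ^ i - ady_x i * ?y ^ (M - i)))"
    by (simp only: cyc_partial_Y_delta assms lie_partial_sum lie_partial_sign
        lie_partial_X_bracket_ady_x diff_Suc_1)
  also have "\<dots> = (\<Sum>i<Suc M. (-1) ^ i * (ady_x (M - i) * ?y ^ i))
                 - (\<Sum>i<Suc M. (-1) ^ i * (ady_x i * ?y ^ (M - i)))"
    by (simp add: right_diff_distrib sum_subtractf)
  also have "(\<Sum>i<Suc M. (-1) ^ i * (ady_x (M - i) * ?y ^ i)) = C1 - ?x * ?y ^ M"
    using \<open>odd M\<close> by (simp add: C1_def ady_x_0)
  also have "(\<Sum>i<Suc M. (-1) ^ i * (ady_x i * ?y ^ (M - i))) = ?x * ?y ^ M + C2"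
    by (simp only: sum.lessThan_Suc_shift C2_def) (simp add: ady_x_0)
  finally have "lie_partial X (cyc_partial Y (delta n)) + (?x * ?y ^ M + ?x * ?y ^ M) = C1 - C2"
    by (simp add: algebra_simps)
  then show ?thesis
    using C1 C2 by (simp add: comm_span_diff)
qed

lemma lie_partial_Y_cyc_partial_X_delta:
  assumes "2 * n = Suc M"
  shows "lie_partial Y (cyc_partial X (delta n)) + (gn X * gn Y ^ M + gn X * gn Y ^ M) \<in> comm_span"
proof -
  have "lie_partial Y (cyc_partial X (delta n)) + (gn X * gn Y ^ M + gn X * gn Y ^ M)
      = (ady_x_Y_part (Suc M) + gn X * gn Y ^ M) + (ady_x_Y_part (Suc M) + gn X * gn Y ^ M)"
    by (simp only: cyc_partial_X_delta assms lie_partial_add lie_partial_Y_ady_x)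
       (simp add: algebra_simps)
  then show ?thesis
    by (simp only:) (intro comm_span.add ady_x_Y_part_Suc_in_comm_span)
qed

lemma tr_zero_div_delta:
  "tr_zero (lie_partial X (cyc_partial Y (delta n)) - lie_partial Y (cyc_partial X (delta n)))"
proof (cases n)
  case 0
  then show ?thesis
    by (simp add: tr_zero_def cyc_partial_X_delta cyc_partial_Y_delta lie_partial_add
        lie_partial_Y_ady_x comm_span.zero)
next
  case (Suc k)
  then obtain M where M: "2 * n = Suc M" by simp
  let ?c = "gn X * gn Y ^ M + gn X * gn Y ^ M"
  have "lie_partial X (cyc_partial Y (delta n)) - lie_partial Y (cyc_partial X (delta n))
      = (lie_partial X (cyc_partial Y (delta n)) + ?c) - (lie_partial Y (cyc_partial X (delta n)) + ?c)"
    by simp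
  then show ?thesis
    unfolding tr_zero_def
    using lie_partial_X_cyc_partial_Y_delta[OF M] lie_partial_Y_cyc_partial_X_delta[OF M]
    by (simp only: comm_span_diff)
qed

theorem mainTheorem7:
  fixes n :: nat
  shows "u_of (delta n) \<in> krv"
proof (rule u_of_in_krvI)
  show "cyc_partial X (delta n) \<in> freeLie"
    by (simp add: cyc_partial_X_delta freeLie.add ady_x_in_freeLie)
  show "cyc_partial Y (delta n) \<in> freeLie"
    by (simp add: cyc_partial_Y_delta freeLie_sum freeLie_sign freeLie.brk ady_x_in_freeLie)
  show "tr_zero (lie_partial X (cyc_partial Y (delta n)) - lie_partial Y (cyc_partial X (delta n)))"
    by (rule tr_zero_div_delta)
qed

end
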